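(* Let $S$ be a $\Gamma$-semiring with zero having a left unity and a right unity, and let $n$ be a positive integer. Then there exists an inclusion preserving bijection between the set of all fuzzy ideals of $S$ and the set of all fuzzy ideals of the matrix $\Gamma_n$-semiring $S_n$.
   Context: A $\Gamma$-semiring: $S$ and $\Gamma$ are additive commutative semigroups with a map $S\times\Gamma\times S\to S$, $(a,\alpha,b)\mapsto a\alpha b$, such that $(a+b)\alpha c=a\alpha c+b\alpha c$, $a\alpha(b+c)=a\alpha b+a\alpha c$, $a(\alpha+\beta)b=a\alpha b+a\beta b$, $a\alpha(b\beta c)=(a\alpha b)\beta c$. With zero: $(S,+)$, $(\Gamma,+)$ are monoids, $0_S\alpha x=0_S=x\alpha0_S$, $x0_\Gamma y=0_S$. A left unity of $S$ is a finite family $e_i\in S,\delta_i\in\Gamma$ with $\sum_ie_i\delta_ia=a$ for all $a\in S$; a right unity is a finite family $\gamma_j\in\Gamma,f_j\in S$ with $\sum_ja\gamma_jf_j=a$ for all $a\in S$. $S_n$ (resp. $\Gamma_n$) is the set of $n\times n$ matrices with entries in $S$ (resp. $\Gamma$), with entrywise addition and, for $A=[a_{ij}],B=[b_{ij}]\in S_n$, $\Delta=[\delta_{ij}]\in\Gamma_n$, $(A\Delta B)_{ij}=\sum_{k,l}a_{ik}\delta_{kl}b_{lj}$; this makes $S_n$ a $\Gamma_n$-semiring with zero. A fuzzy ideal of a $\Gamma$-semiring $T$ is a map $\mu:T\to[0,1]$, not identically $0$, with $\mu(x+y)\ge\min[\mu(x),\mu(y)]$, $\mu(x\gamma y)\ge\mu(y)$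 and $\mu(x\gamma y)\ge\mu(x)$ for all $x,y\in T$ and all $\gamma$; by convention fuzzy ideals satisfy $\mu(0)=1$. Inclusion of fuzzy subsets is pointwise $\le$. *)

theory Defs
  imports Complex_Main
begin

fun fsum :: "('a \<Rightarrow> 'a \<Rightarrow> 'a) \<Rightarrow> 'a \<Rightarrow> (nat \<Rightarrow> 'a) \<Rightarrow> nat \<Rightarrow> 'a" where
  "fsum add z f 0 = z"
| "fsum add z f (Suc m) = add (fsum add z f m) (f m)"

definition comm_semigroup_on :: "'a set \<Rightarrow> ('a \<Rightarrow> 'a \<Rightarrow> 'a) \<Rightarrow> bool" where
  "comm_semigroup_on A add \<longleftrightarrow>
     (\<forall>x\<in>A. \<forall>y\<in>A. add x y \<in> A) \<and>
     (\<forall>x\<in>A. \<forall>y\<in>A. \<forall>z\<in>A. add (add x y) z = add x (add y z)) \<and>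
     (\<forall>x\<in>A. \<forall>y\<in>A. add x y = add y x)"

definition gamma_semiring ::
  "'a set \<Rightarrow> 'g set \<Rightarrow> ('a \<Rightarrow> 'a \<Rightarrow> 'a) \<Rightarrow> ('g \<Rightarrow> 'g \<Rightarrow> 'g) \<Rightarrow> ('a \<Rightarrow> 'g \<Rightarrow> 'a \<Rightarrow> 'a) \<Rightarrow> bool" where
  "gamma_semiring S G addS addG mult \<longleftrightarrow>
     comm_semigroup_on S addS \<and> comm_semigroup_on G addG \<and>
     (\<forall>a\<in>S. \<forall>\<alpha>\<in>G. \<forall>b\<in>S. mult a \<alpha> b \<in> S) \<and>
     (\<forall>a\<in>S. \<forall>b\<in>S. \<forall>c\<in>S. \<forall>\<alpha>\<in>G. mult (addS a b) \<alpha> c = addS (mult a \<alpha> c) (mult b \<alpha> c)) \<and>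
     (\<forall>a\<in>S. \<forall>b\<in>S. \<forall>c\<in>S. \<forall>\<alpha>\<in>G. mult a \<alpha> (addS b c) = addS (mult a \<alpha> b) (mult a \<alpha> c)) \<and>
     (\<forall>a\<in>S. \<forall>b\<in>S. \<forall>\<alpha>\<in>G. \<forall>\<beta>\<in>G. mult a (addG \<alpha> \<beta>) b = addS (mult a \<alpha> b) (mult a \<beta> b)) \<and>
     (\<forall>a\<in>S. \<forall>b\<in>S. \<forall>c\<in>S. \<forall>\<alpha>\<in>G. \<forall>\<beta>\<in>G. mult a \<alpha> (mult b \<beta> c) = mult (mult a \<alpha> b) \<beta> c)"

definition gamma_semiring_zero ::
  "'a set \<Rightarrow> 'g set \<Rightarrow> ('a \<Rightarrow> 'a \<Rightarrow> 'a) \<Rightarrow> 'a \<Rightarrow> ('g \<Rightarrow> 'g \<Rightarrow> 'g) \<Rightarrow> 'g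
     \<Rightarrow> ('a \<Rightarrow> 'g \<Rightarrow> 'a \<Rightarrow> 'a) \<Rightarrow> bool" where
  "gamma_semiring_zero S G addS zS addG zG mult \<longleftrightarrow>
     gamma_semiring S G addS addG mult \<and>
     zS \<in> S \<and> (\<forall>x\<in>S. addS zS x = x \<and> addS x zS = x) \<and>
     zG \<in> G \<and> (\<forall>\<alpha>\<in>G. addG zG \<alpha> = \<alpha> \<and> addG \<alpha> zG = \<alpha>) \<and>
     (\<forall>\<alpha>\<in>G. \<forall>x\<in>S. mult zS \<alpha> x = zS \<and> mult x \<alpha> zS = zS) \<and>
     (\<forall>x\<in>S. \<forall>y\<in>S. mult x zG y = zS)"

definition has_left_unity ::
  "'a set \<Rightarrow> 'g set \<Rightarrow> ('a \<Rightarrow> 'a \<Rightarrow> 'a) \<Rightarrow> 'a \<Rightarrow> ('a \<Rightarrow> 'g \<Rightarrow> 'a \<Rightarrow> 'a) \<Rightarrow> bool" where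
  "has_left_unity S G addS zS mult \<longleftrightarrow>
     (\<exists>(m::nat) e \<delta>. (\<forall>i<m. e i \<in> S \<and> \<delta> i \<in> G) \<and>
        (\<forall>a\<in>S. fsum addS zS (\<lambda>i. mult (e i) (\<delta> i) a) m = a))"

definition has_right_unity ::
  "'a set \<Rightarrow> 'g set \<Rightarrow> ('a \<Rightarrow> 'a \<Rightarrow> 'a) \<Rightarrow> 'a \<Rightarrow> ('a \<Rightarrow> 'g \<Rightarrow> 'a \<Rightarrow> 'a) \<Rightarrow> bool" where
  "has_right_unity S G addS zS mult \<longleftrightarrow>
     (\<exists>(m::nat) \<gamma> f. (\<forall>j<m. \<gamma> j \<in> G \<and> f j \<in> S) \<and>
        (\<forall>a\<in>S. fsum addS zS (\<lambda>j. mult a (\<gamma> j) (f j)) m = a))"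

text \<open>n x n matrices, represented as functions nat => nat => 'a with entries
  outside the index range {0..<n} x {0..<n} fixed to the zero element.\<close>
definition mat_carrier :: "'a set \<Rightarrow> 'a \<Rightarrow> nat \<Rightarrow> (nat \<Rightarrow> nat \<Rightarrow> 'a) set" where
  "mat_carrier A z n = {M. (\<forall>i<n. \<forall>j<n. M i j \<in> A) \<and> (\<forall>i j. (n \<le> i \<or> n \<le> j) \<longrightarrow> M i j = z)}"

definition mat_add :: "('a \<Rightarrow> 'a \<Rightarrow> 'a) \<Rightarrow> 'a \<Rightarrow> nat \<Rightarrow>
    (nat \<Rightarrow> nat \<Rightarrow> 'a) \<Rightarrow> (nat \<Rightarrow> nat \<Rightarrow> 'a) \<Rightarrow> (nat \<Rightarrow> nat \<Rightarrow> 'a)" where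
  "mat_add add z n M N = (\<lambda>i j. if i < n \<and> j < n then add (M i j) (N i j) else z)"

definition mat_zero :: "'a \<Rightarrow> (nat \<Rightarrow> nat \<Rightarrow> 'a)" where
  "mat_zero z = (\<lambda>i j. z)"

definition mat_mult :: "('a \<Rightarrow> 'a \<Rightarrow> 'a) \<Rightarrow> 'a \<Rightarrow> ('a \<Rightarrow> 'g \<Rightarrow> 'a \<Rightarrow> 'a) \<Rightarrow> nat \<Rightarrow>
    (nat \<Rightarrow> nat \<Rightarrow> 'a) \<Rightarrow> (nat \<Rightarrow> nat \<Rightarrow> 'g) \<Rightarrow> (nat \<Rightarrow> nat \<Rightarrow> 'a) \<Rightarrow> (nat \<Rightarrow> nat \<Rightarrow> 'a)" where
  "mat_mult add z mult n A D B =
     (\<lambda>i j. if i < n \<and> j < n then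
        fsum add z (\<lambda>k. fsum add z (\<lambda>l. mult (A i k) (D k l) (B l j)) n) n
      else z)"

text \<open>Fuzzy ideal of a Gamma-semiring with carrier T, Gamma-carrier G, addition add,
  zero z, product mult.  Fuzzy subsets are represented extensionally: value 0 outside T.\<close>
definition fuzzy_ideal ::
  "'x set \<Rightarrow> 'g set \<Rightarrow> ('x \<Rightarrow> 'x \<Rightarrow> 'x) \<Rightarrow> 'x \<Rightarrow> ('x \<Rightarrow> 'g \<Rightarrow> 'x \<Rightarrow> 'x) \<Rightarrow> ('x \<Rightarrow> real) \<Rightarrow> bool" where
  "fuzzy_ideal T G add z mult \<mu> \<longleftrightarrow>
     (\<forall>x\<in>T. 0 \<le> \<mu> x \<and> \<mu> x \<le> 1) \<and>
     (\<forall>x. x \<notin> T \<longrightarrow> \<mu> x = 0) \<and>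
     (\<exists>x\<in>T. \<mu> x \<noteq> 0) \<and>
     (\<forall>x\<in>T. \<forall>y\<in>T. \<mu> (add x y) \<ge> min (\<mu> x) (\<mu> y)) \<and>
     (\<forall>x\<in>T. \<forall>y\<in>T. \<forall>\<gamma>\<in>G. \<mu> (mult x \<gamma> y) \<ge> \<mu> y \<and> \<mu> (mult x \<gamma> y) \<ge> \<mu> x) \<and>
     \<mu> z = 1"

definition fuzzy_ideals ::
  "'x set \<Rightarrow> 'g set \<Rightarrow> ('x \<Rightarrow> 'x \<Rightarrow> 'x) \<Rightarrow> 'x \<Rightarrow> ('x \<Rightarrow> 'g \<Rightarrow> 'x \<Rightarrow> 'x) \<Rightarrow> ('x \<Rightarrow> real) set" where
  "fuzzy_ideals T G add z mult = {\<mu>. fuzzy_ideal T G add z mult \<mu>}"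

definition fuzzy_incl :: "'x set \<Rightarrow> ('x \<Rightarrow> real) \<Rightarrow> ('x \<Rightarrow> real) \<Rightarrow> bool" where
  "fuzzy_incl T \<mu> \<nu> \<longleftrightarrow> (\<forall>x\<in>T. \<mu> x \<le> \<nu> x)"

end

theory Submission
  imports Defs
begin

text \<open>A fuzzy ideal \<mu> of S induces the fuzzy subset of S_n sending a matrix to the minimum
  of \<mu> over its entries; conversely a fuzzy ideal \<nu> of S_n is restricted to S along the corner
  embedding a \<mapsto> E_00(a). The first composite is the identity because E_00(a) has entries a
  and 0. For the second, the unities write every a as the sum of the e_k \<delta>_k a \<gamma>_l f_l, and
  E_pq(e \<delta> a_ij \<gamma> f) = E_pi(e) \<Delta> A \<Delta>' E_jq(f) for matrix units \<Delta>, \<Delta>' with entries \<delta>, \<gamma>;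
  hence \<nu>(A) \<le> \<nu>(E_pq(a_ij)) for all indices, while A = \<Sum>_ij E_ij(a_ij) gives the reverse
  inequality for the minimum.\<close>

lemma fsum_cong: "(\<And>k. k < m \<Longrightarrow> f k = g k) \<Longrightarrow> fsum add z f m = fsum add z g m"
  by (induction m) auto

lemma fsum_closed:
  assumes "\<forall>x\<in>T. \<forall>y\<in>T. add x y \<in> T" and "z \<in> T" and "\<forall>k<m. f k \<in> T"
  shows "fsum add z f m \<in> T"
  using assms(3) by (induction m) (auto simp: assms(1,2))

lemma fsum_mat_add:
  "fsum (mat_add add z n) (mat_zero z) H m i j =
     (if i < n \<and> j < n then fsum add z (\<lambda>k. H k i j) m else z)"
  by (induction m) (auto simp: mat_add_def mat_zero_def)

lemma fuzzy_ideal_add: "fuzzy_ideal T G add z mult \<mu> \<Longrightarrow> x \<in> T \<Longrightarrow> y \<in> T \<Longrightarrow> min (\<mu> x) (\<mu> y) \<le> \<mu> (add x y)"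
  by (simp add: fuzzy_ideal_def)

lemma fuzzy_ideal_mult_left: "fuzzy_ideal T G add z mult \<mu> \<Longrightarrow> x \<in> T \<Longrightarrow> y \<in> T \<Longrightarrow> \<gamma> \<in> G \<Longrightarrow> \<mu> x \<le> \<mu> (mult x \<gamma> y)"
  by (simp add: fuzzy_ideal_def)

lemma fuzzy_ideal_mult_right: "fuzzy_ideal T G add z mult \<mu> \<Longrightarrow> x \<in> T \<Longrightarrow> y \<in> T \<Longrightarrow> \<gamma> \<in> G \<Longrightarrow> \<mu> y \<le> \<mu> (mult x \<gamma> y)"
  by (simp add: fuzzy_ideal_def)

lemma fuzzy_ideal_zero: "fuzzy_ideal T G add z mult \<mu> \<Longrightarrow> \<mu> z = 1"
  by (simp add: fuzzy_ideal_def)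

lemma fuzzy_ideal_le_one: "fuzzy_ideal T G add z mult \<mu> \<Longrightarrow> x \<in> T \<Longrightarrow> \<mu> x \<le> 1"
  by (simp add: fuzzy_ideal_def)

lemma fuzzy_ideal_nonneg: "fuzzy_ideal T G add z mult \<mu> \<Longrightarrow> x \<in> T \<Longrightarrow> 0 \<le> \<mu> x"
  by (simp add: fuzzy_ideal_def)

lemma fuzzy_ideal_outside: "fuzzy_ideal T G add z mult \<mu> \<Longrightarrow> x \<notin> T \<Longrightarrow> \<mu> x = 0"
  by (simp add: fuzzy_ideal_def)

lemma fuzzy_ideal_zero_in: "fuzzy_ideal T G add z mult \<mu> \<Longrightarrow> z \<in> T"
  using fuzzy_ideal_zero fuzzy_ideal_outside by fastforce

lemma fuzzy_ideal_fsum_ge: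
  assumes \<mu>: "fuzzy_ideal T G add z mult \<mu>" and closed: "\<forall>x\<in>T. \<forall>y\<in>T. add x y \<in> T"
    and "c \<le> 1" and "\<forall>k<m. f k \<in> T \<and> c \<le> \<mu> (f k)"
  shows "c \<le> \<mu> (fsum add z f m)"
  using assms(4)
proof (induction m)
  case 0
  then show ?case using fuzzy_ideal_zero[OF \<mu>] \<open>c \<le> 1\<close> by simp
next
  case (Suc m)
  have "fsum add z f m \<in> T"
    using fsum_closed[OF closed fuzzy_ideal_zero_in[OF \<mu>]] Suc.prems by simp
  then show ?case
    using Suc fuzzy_ideal_add[OF \<mu>, of "fsum add z f m" "f m"] by fastforce
qed

definition mat_unit :: "'x \<Rightarrow> nat \<Rightarrow> nat \<Rightarrow> 'x \<Rightarrow> (nat \<Rightarrow> nat \<Rightarrow> 'x)" where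
  "mat_unit z p q x = (\<lambda>i j. if i = p \<and> j = q then x else z)"

lemma mat_unit_at [simp]: "mat_unit z p q x p q = x"
  by (simp add: mat_unit_def)

lemma mat_unit_zero: "mat_unit z p q z = mat_zero z"
  by (auto simp: mat_unit_def mat_zero_def)

locale zero_gamma_semiring_matrices =
  fixes S :: "'a set" and G :: "'g set"
    and addS :: "'a \<Rightarrow> 'a \<Rightarrow> 'a" and zS :: 'a
    and addG :: "'g \<Rightarrow> 'g \<Rightarrow> 'g" and zG :: 'g
    and mult :: "'a \<Rightarrow> 'g \<Rightarrow> 'a \<Rightarrow> 'a" and n :: nat
  assumes gamma_semiring_zero: "gamma_semiring_zero S G addS zS addG zG mult"
    and n_pos: "0 < n"
begin

lemma addS_closed [simp]: "x \<in> S \<Longrightarrow> y \<in> S \<Longrightarrow> addS x y \<in> S"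
  using gamma_semiring_zero
  by (auto simp: gamma_semiring_zero_def gamma_semiring_def comm_semigroup_on_def)

lemma mult_closed [simp]: "x \<in> S \<Longrightarrow> \<alpha> \<in> G \<Longrightarrow> y \<in> S \<Longrightarrow> mult x \<alpha> y \<in> S"
  using gamma_semiring_zero by (auto simp: gamma_semiring_zero_def gamma_semiring_def)

lemma zS_in [simp]: "zS \<in> S"
  and zG_in [simp]: "zG \<in> G"
  and addS_zero_left [simp]: "x \<in> S \<Longrightarrow> addS zS x = x"
  and addS_zero_right [simp]: "x \<in> S \<Longrightarrow> addS x zS = x"
  and mult_zero_left [simp]: "\<alpha> \<in> G \<Longrightarrow> x \<in> S \<Longrightarrow> mult zS \<alpha> x = zS"
  and mult_zero_right [simp]: "\<alpha> \<in> G \<Longrightarrow> x \<in> S \<Longrightarrow> mult x \<alpha> zS = zS"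
  and mult_zG [simp]: "x \<in> S \<Longrightarrow> y \<in> S \<Longrightarrow> mult x zG y = zS"
  using gamma_semiring_zero by (auto simp: gamma_semiring_zero_def)

abbreviation "MS \<equiv> mat_carrier S zS n"
abbreviation "MG \<equiv> mat_carrier G zG n"
abbreviation "madd \<equiv> mat_add addS zS n"
abbreviation "mmult \<equiv> mat_mult addS zS mult n"
abbreviation "FS \<equiv> fuzzy_ideal S G addS zS mult"
abbreviation "FM \<equiv> fuzzy_ideal MS MG madd (mat_zero zS) mmult"

lemma fsum_S_closed: "\<forall>k<m. f k \<in> S \<Longrightarrow> fsum addS zS f m \<in> S"
  by (rule fsum_closed) auto

lemma fsum_zero: "fsum addS zS (\<lambda>_. zS) m = zS"
  by (induction m) auto

lemma fsum_single:
  assumes "\<forall>k<m. k \<noteq> p \<longrightarrow> f k = zS" and "p < m \<Longrightarrow> f p \<in> S"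
  shows "fsum addS zS f m = (if p < m then f p else zS)"
  using assms
proof (induction m)
  case (Suc m)
  then have IH: "fsum addS zS f m = (if p < m then f p else zS)" by auto
  show ?case
  proof (cases "m = p")
    case True
    then show ?thesis using IH Suc.prems(2) by simp
  next
    case False
    then have "f m = zS" using Suc.prems(1) by simp
    moreover have "fsum addS zS f m \<in> S" using IH Suc.prems(2) by simp
    ultimately show ?thesis using IH False by auto
  qed
qed simp

lemma mat_entry_in: "A \<in> mat_carrier T z n \<Longrightarrow> i < n \<Longrightarrow> j < n \<Longrightarrow> A i j \<in> T"
  by (auto simp: mat_carrier_def)

lemma MS_entry [simp]: "A \<in> MS \<Longrightarrow> i < n \<Longrightarrow> j < n \<Longrightarrow> A i j \<in> S"
  and MG_entry [simp]: "D \<in> MG \<Longrightarrow> i < n \<Longrightarrow> j < n \<Longrightarrow> D i j \<in> G"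
  by (simp_all add: mat_entry_in)

lemma mat_entry_outside: "A \<in> mat_carrier T z n \<Longrightarrow> \<not> (i < n \<and> j < n) \<Longrightarrow> A i j = z"
  by (auto simp: mat_carrier_def not_less)

lemma madd_closed: "A \<in> MS \<Longrightarrow> B \<in> MS \<Longrightarrow> madd A B \<in> MS"
  by (auto simp del: MS_entry MG_entry simp: mat_carrier_def mat_add_def)

lemma madd_closed_on: "\<forall>A\<in>MS. \<forall>B\<in>MS. madd A B \<in> MS"
  using madd_closed by blast

lemma mat_zero_in: "mat_zero zS \<in> MS"
  by (auto simp del: MS_entry MG_entry simp: mat_carrier_def mat_zero_def)

lemma mmult_closed: "A \<in> MS \<Longrightarrow> D \<in> MG \<Longrightarrow> B \<in> MS \<Longrightarrow> mmult A D B \<in> MS"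
  by (auto simp del: MS_entry MG_entry simp: mat_carrier_def mat_mult_def intro!: fsum_S_closed)

lemma mat_unit_in: "x \<in> T \<Longrightarrow> z \<in> T \<Longrightarrow> p < n \<Longrightarrow> q < n \<Longrightarrow> mat_unit z p q x \<in> mat_carrier T z n"
  by (auto simp: mat_unit_def mat_carrier_def)

lemma mat_unit_fsum:
  "p < n \<Longrightarrow> q < n \<Longrightarrow>
   mat_unit zS p q (fsum addS zS g m) = fsum madd (mat_zero zS) (\<lambda>k. mat_unit zS p q (g k)) m"
  by (intro ext) (auto simp: fsum_mat_add mat_unit_def fsum_zero)

lemma mmult_unit_left:
  assumes "x \<in> S" "\<delta> \<in> G" "B \<in> MS" "p < n" "q < n" "r < n"
  shows "mmult (mat_unit zS p q x) (mat_unit zG q r \<delta>) B =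
           (\<lambda>i j. if i = p \<and> j < n then mult x \<delta> (B r j) else zS)"
proof (intro ext)
  fix i j
  have "fsum addS zS (\<lambda>l. mult (mat_unit zS p q x i k) (mat_unit zG q r \<delta> k l) (B l j)) n
        = (if i = p \<and> k = q then mult x \<delta> (B r j) else zS)" if "j < n" for k
    using assms that by (subst fsum_single[where p = r]) (auto simp: mat_unit_def)
  then show "mmult (mat_unit zS p q x) (mat_unit zG q r \<delta>) B i j =
             (if i = p \<and> j < n then mult x \<delta> (B r j) else zS)"
    using assms by (auto simp: mat_mult_def fsum_single[where p = q])
qed

lemma mmult_unit_right:
  assumes "y \<in> S" "\<gamma> \<in> G" "A \<in> MS" "p < n" "q < n" "r < n"
  shows "mmult A (mat_unit zG r q \<gamma>) (mat_unit zS q p y) =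
           (\<lambda>i j. if i < n \<and> j = p then mult (A i r) \<gamma> y else zS)"
proof (intro ext)
  fix i j
  have "fsum addS zS (\<lambda>l. mult (A i k) (mat_unit zG r q \<gamma> k l) (mat_unit zS q p y l j)) n
        = (if k = r \<and> j = p then mult (A i r) \<gamma> y else zS)" if "i < n" "k < n" for k
    using assms that by (subst fsum_single[where p = q]) (auto simp: mat_unit_def)
  then show "mmult A (mat_unit zG r q \<gamma>) (mat_unit zS q p y) i j =
             (if i < n \<and> j = p then mult (A i r) \<gamma> y else zS)"
    using assms by (auto simp: mat_mult_def fsum_single[where p = r])
qed

lemma mat_decomposition:
  assumes A: "A \<in> MS"
  shows "A = fsum madd (mat_zero zS) (\<lambda>i. fsum madd (mat_zero zS) (\<lambda>j. mat_unit zS i j (A i j)) n) n"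
proof (intro ext)
  fix a b
  show "A a b = fsum madd (mat_zero zS) (\<lambda>i. fsum madd (mat_zero zS) (\<lambda>j. mat_unit zS i j (A i j)) n) n a b"
  proof (cases "a < n \<and> b < n")
    case True
    have "fsum addS zS (\<lambda>k. mat_unit zS i k (A i k) a b) n = (if i = a then A a b else zS)" if "i < n" for i
      using True A that by (subst fsum_single[where p = b]) (auto simp: mat_unit_def)
    then show ?thesis using True A by (simp add: fsum_mat_add fsum_single[where p = a])
  next
    case False
    then show ?thesis by (auto simp: fsum_mat_add mat_entry_outside[OF A False])
  qed
qed

lemma corner_add: "x \<in> S \<Longrightarrow> y \<in> S \<Longrightarrow>
    mat_unit zS 0 0 (addS x y) = madd (mat_unit zS 0 0 x) (mat_unit zS 0 0 y)"
  using n_pos by (intro ext) (auto simp: mat_unit_def mat_add_def)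

lemma corner_mult: "x \<in> S \<Longrightarrow> \<gamma> \<in> G \<Longrightarrow> y \<in> S \<Longrightarrow>
    mat_unit zS 0 0 (mult x \<gamma> y) = mmult (mat_unit zS 0 0 x) (mat_unit zG 0 0 \<gamma>) (mat_unit zS 0 0 y)"
proof -
  assume "x \<in> S" "\<gamma> \<in> G" "y \<in> S"
  moreover have "mat_unit zS 0 0 y \<in> MS" using \<open>y \<in> S\<close> n_pos by (simp add: mat_unit_in)
  ultimately show ?thesis using n_pos by (simp add: mmult_unit_left) (intro ext; auto simp: mat_unit_def)
qed

definition mat_fuzzy :: "('a \<Rightarrow> real) \<Rightarrow> (nat \<Rightarrow> nat \<Rightarrow> 'a) \<Rightarrow> real" where
  "mat_fuzzy \<mu> A = (if A \<in> MS then Min ((\<lambda>(i, j). \<mu> (A i j)) ` ({..<n} \<times> {..<n})) else 0)"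

definition corner_fuzzy :: "((nat \<Rightarrow> nat \<Rightarrow> 'a) \<Rightarrow> real) \<Rightarrow> 'a \<Rightarrow> real" where
  "corner_fuzzy \<nu> a = (if a \<in> S then \<nu> (mat_unit zS 0 0 a) else 0)"

lemma mat_fuzzy_le: "A \<in> MS \<Longrightarrow> i < n \<Longrightarrow> j < n \<Longrightarrow> mat_fuzzy \<mu> A \<le> \<mu> (A i j)"
  unfolding mat_fuzzy_def by (auto intro!: Min_le)

lemma mat_fuzzy_ge: "A \<in> MS \<Longrightarrow> (\<And>i j. i < n \<Longrightarrow> j < n \<Longrightarrow> c \<le> \<mu> (A i j)) \<Longrightarrow> c \<le> mat_fuzzy \<mu> A"
proof -
  assume "A \<in> MS" and ge: "\<And>i j. i < n \<Longrightarrow> j < n \<Longrightarrow> c \<le> \<mu> (A i j)"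
  have "(\<lambda>(i, j). \<mu> (A i j)) ` ({..<n} \<times> {..<n}) \<noteq> {}" using n_pos by auto
  with \<open>A \<in> MS\<close> ge show ?thesis by (auto simp: mat_fuzzy_def)
qed

lemma mat_fuzzy_mono: "fuzzy_incl S \<mu> \<mu>' \<Longrightarrow> fuzzy_incl MS (mat_fuzzy \<mu>) (mat_fuzzy \<mu>')"
  unfolding fuzzy_incl_def
proof (intro ballI impI)
  fix A assume le: "\<forall>x\<in>S. \<mu> x \<le> \<mu>' x" and A: "A \<in> MS"
  show "mat_fuzzy \<mu> A \<le> mat_fuzzy \<mu>' A"
  proof (rule mat_fuzzy_ge[OF A])
    fix i j assume "i < n" "j < n"
    then have "mat_fuzzy \<mu> A \<le> \<mu> (A i j)" "\<mu> (A i j) \<le> \<mu>' (A i j)"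
      using mat_fuzzy_le[OF A] le A by simp_all
    then show "mat_fuzzy \<mu> A \<le> \<mu>' (A i j)" by linarith
  qed
qed

lemma mat_fuzzy_mmult_ge:
  assumes \<mu>: "FS \<mu>" and A: "A \<in> MS" and D: "D \<in> MG" and B: "B \<in> MS" and "c \<le> 1"
    and ge: "\<And>i k l j. i < n \<Longrightarrow> k < n \<Longrightarrow> l < n \<Longrightarrow> j < n \<Longrightarrow> c \<le> \<mu> (mult (A i k) (D k l) (B l j))"
  shows "c \<le> mat_fuzzy \<mu> (mmult A D B)"
proof (rule mat_fuzzy_ge[OF mmult_closed[OF A D B]])
  have closed: "\<forall>x\<in>S. \<forall>y\<in>S. addS x y \<in> S" by simp
  fix i j assume "i < n" "j < n"
  with assms show "c \<le> \<mu> (mmult A D B i j)"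
    by (auto simp: mat_mult_def intro!: fuzzy_ideal_fsum_ge[OF \<mu> closed] fsum_S_closed)
qed

lemma mat_fuzzy_ideal:
  assumes \<mu>: "FS \<mu>"
  shows "FM (mat_fuzzy \<mu>)"
proof -
  have le_one: "mat_fuzzy \<mu> A \<le> 1" if "A \<in> MS" for A
    using mat_fuzzy_le[OF that n_pos n_pos, of \<mu>] fuzzy_ideal_le_one[OF \<mu> mat_entry_in[OF that n_pos n_pos]]
    by linarith
  have zero: "mat_fuzzy \<mu> (mat_zero zS) = 1"
    using le_one[OF mat_zero_in] mat_fuzzy_ge[OF mat_zero_in, of 1 \<mu>] fuzzy_ideal_zero[OF \<mu>]
    by (auto simp: mat_zero_def)
  show ?thesis
    unfolding fuzzy_ideal_def
  proof (intro conjI ballI allI impI)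
    show "0 \<le> mat_fuzzy \<mu> A" if "A \<in> MS" for A
      by (rule mat_fuzzy_ge[OF that]) (rule fuzzy_ideal_nonneg[OF \<mu> mat_entry_in[OF that]])
    show "mat_fuzzy \<mu> A = 0" if "A \<notin> MS" for A
      using that by (simp add: mat_fuzzy_def)
    show "\<exists>A\<in>MS. mat_fuzzy \<mu> A \<noteq> 0"
      using mat_zero_in zero by force
    show "min (mat_fuzzy \<mu> A) (mat_fuzzy \<mu> B) \<le> mat_fuzzy \<mu> (madd A B)" if "A \<in> MS" "B \<in> MS" for A B
    proof (rule mat_fuzzy_ge[OF madd_closed[OF that]])
      fix i j assume ij: "i < n" "j < n"
      have "min (mat_fuzzy \<mu> A) (mat_fuzzy \<mu> B) \<le> min (\<mu> (A i j)) (\<mu> (B i j))"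
        using mat_fuzzy_le[OF that(1) ij, of \<mu>] mat_fuzzy_le[OF that(2) ij, of \<mu>] by linarith
      also have "\<dots> \<le> \<mu> (madd A B i j)"
        using fuzzy_ideal_add[OF \<mu>] that ij by (simp add: mat_add_def)
      finally show "min (mat_fuzzy \<mu> A) (mat_fuzzy \<mu> B) \<le> \<mu> (madd A B i j)" .
    qed
    show "mat_fuzzy \<mu> B \<le> mat_fuzzy \<mu> (mmult A D B)"
      and "mat_fuzzy \<mu> A \<le> mat_fuzzy \<mu> (mmult A D B)" if "A \<in> MS" "B \<in> MS" "D \<in> MG" for A B D
    proof (rule_tac [!] mat_fuzzy_mmult_ge[OF \<mu> that(1,3,2)])
      show "mat_fuzzy \<mu> B \<le> 1" "mat_fuzzy \<mu> A \<le> 1" using le_one that by simp_all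
      fix i k l j assume ikl: "i < n" "k < n" "l < n" "j < n"
      have entries: "A i k \<in> S" "D k l \<in> G" "B l j \<in> S"
        using that ikl by simp_all
      show "mat_fuzzy \<mu> B \<le> \<mu> (mult (A i k) (D k l) (B l j))"
        using mat_fuzzy_le[OF that(2) ikl(3,4), of \<mu>] fuzzy_ideal_mult_right[OF \<mu> entries(1,3,2)] by linarith
      show "mat_fuzzy \<mu> A \<le> \<mu> (mult (A i k) (D k l) (B l j))"
        using mat_fuzzy_le[OF that(1) ikl(1,2), of \<mu>] fuzzy_ideal_mult_left[OF \<mu> entries(1,3,2)] by linarith
    qed
  qed (use le_one zero in auto)
qed

lemma corner_fuzzy_ideal:
  assumes \<nu>: "FM \<nu>"
  shows "FS (corner_fuzzy \<nu>)"
  unfolding fuzzy_ideal_def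
proof (intro conjI ballI allI impI)
  have E: "mat_unit zS 0 0 x \<in> MS" if "x \<in> S" for x using mat_unit_in[OF that zS_in n_pos n_pos] .
  have EG: "mat_unit zG 0 0 \<gamma> \<in> MG" if "\<gamma> \<in> G" for \<gamma> using mat_unit_in[OF that zG_in n_pos n_pos] .
  show "corner_fuzzy \<nu> zS = 1"
    using fuzzy_ideal_zero[OF \<nu>] by (simp add: corner_fuzzy_def mat_unit_zero)
  then show "\<exists>x\<in>S. corner_fuzzy \<nu> x \<noteq> 0" by (intro bexI[of _ zS]) simp_all
  show "0 \<le> corner_fuzzy \<nu> x" "corner_fuzzy \<nu> x \<le> 1" if "x \<in> S" for x
    using that E fuzzy_ideal_nonneg[OF \<nu>] fuzzy_ideal_le_one[OF \<nu>] by (simp_all add: corner_fuzzy_def)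
  show "corner_fuzzy \<nu> x = 0" if "x \<notin> S" for x
    using that by (simp add: corner_fuzzy_def)
  show "min (corner_fuzzy \<nu> x) (corner_fuzzy \<nu> y) \<le> corner_fuzzy \<nu> (addS x y)" if "x \<in> S" "y \<in> S" for x y
    using that E fuzzy_ideal_add[OF \<nu>] by (simp add: corner_fuzzy_def corner_add)
  show "corner_fuzzy \<nu> y \<le> corner_fuzzy \<nu> (mult x \<gamma> y)"
    "corner_fuzzy \<nu> x \<le> corner_fuzzy \<nu> (mult x \<gamma> y)" if "x \<in> S" "y \<in> S" "\<gamma> \<in> G" for x y \<gamma>
  proof -
    have "corner_fuzzy \<nu> (mult x \<gamma> y) = \<nu> (mat_unit zS 0 0 (mult x \<gamma> y))"
      using that by (simp add: corner_fuzzy_def)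
    also have "\<dots> = \<nu> (mmult (mat_unit zS 0 0 x) (mat_unit zG 0 0 \<gamma>) (mat_unit zS 0 0 y))"
      by (simp only: corner_mult[OF that(1,3,2)])
    finally have "corner_fuzzy \<nu> (mult x \<gamma> y) = \<nu> (mmult (mat_unit zS 0 0 x) (mat_unit zG 0 0 \<gamma>) (mat_unit zS 0 0 y))" .
    then show "corner_fuzzy \<nu> y \<le> corner_fuzzy \<nu> (mult x \<gamma> y)"
      "corner_fuzzy \<nu> x \<le> corner_fuzzy \<nu> (mult x \<gamma> y)"
      using that fuzzy_ideal_mult_right[OF \<nu> E[OF that(1)] E[OF that(2)] EG[OF that(3)]]
        fuzzy_ideal_mult_left[OF \<nu> E[OF that(1)] E[OF that(2)] EG[OF that(3)]]
      by (simp_all add: corner_fuzzy_def)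
  qed
qed

lemma corner_fuzzy_mat_fuzzy:
  assumes \<mu>: "FS \<mu>"
  shows "corner_fuzzy (mat_fuzzy \<mu>) = \<mu>"
proof
  fix a
  show "corner_fuzzy (mat_fuzzy \<mu>) a = \<mu> a"
  proof (cases "a \<in> S")
    case True
    have E: "mat_unit zS 0 0 a \<in> MS" using mat_unit_in[OF True zS_in n_pos n_pos] .
    have "mat_fuzzy \<mu> (mat_unit zS 0 0 a) \<le> \<mu> a"
      using mat_fuzzy_le[OF E n_pos n_pos, of \<mu>] by (simp add: mat_unit_def)
    moreover have "\<mu> a \<le> mat_fuzzy \<mu> (mat_unit zS 0 0 a)"
      using fuzzy_ideal_zero[OF \<mu>] fuzzy_ideal_le_one[OF \<mu> True]
      by (intro mat_fuzzy_ge[OF E]) (auto simp: mat_unit_def)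
    ultimately show ?thesis using True by (simp add: corner_fuzzy_def)
  qed (simp add: corner_fuzzy_def fuzzy_ideal_outside[OF \<mu>])
qed

end

locale zero_gamma_semiring_matrices_unity = zero_gamma_semiring_matrices +
  assumes left_unity: "has_left_unity S G addS zS mult"
    and right_unity: "has_right_unity S G addS zS mult"
begin

lemma unity_expansion:
  "\<exists>m1 e \<delta> m2 \<gamma> f. (\<forall>k<m1. e k \<in> S \<and> \<delta> k \<in> G) \<and> (\<forall>l<m2. \<gamma> l \<in> G \<and> f l \<in> S) \<and>
     (\<forall>x\<in>S. x = fsum addS zS (\<lambda>k. fsum addS zS (\<lambda>l. mult (mult (e k) (\<delta> k) x) (\<gamma> l) (f l)) m2) m1)"
proof -
  obtain m1 e \<delta> where e: "\<forall>k<m1. e k \<in> S \<and> \<delta> k \<in> G"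
    and left: "\<forall>a\<in>S. fsum addS zS (\<lambda>k. mult (e k) (\<delta> k) a) m1 = a"
    using left_unity unfolding has_left_unity_def by blast
  obtain m2 \<gamma> f where f: "\<forall>l<m2. \<gamma> l \<in> G \<and> f l \<in> S"
    and right: "\<forall>a\<in>S. fsum addS zS (\<lambda>l. mult a (\<gamma> l) (f l)) m2 = a"
    using right_unity unfolding has_right_unity_def by blast
  have expansion: "x = fsum addS zS (\<lambda>k. fsum addS zS (\<lambda>l. mult (mult (e k) (\<delta> k) x) (\<gamma> l) (f l)) m2) m1"
    if "x \<in> S" for x
  proof -
    have "x = fsum addS zS (\<lambda>k. mult (e k) (\<delta> k) x) m1" using left that by simp
    also have "\<dots> = fsum addS zS (\<lambda>k. fsum addS zS (\<lambda>l. mult (mult (e k) (\<delta> k) x) (\<gamma> l) (f l)) m2) m1"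
      using e that by (intro fsum_cong) (simp add: right[rule_format])
    finally show ?thesis .
  qed
  show ?thesis using e f expansion by blast
qed

lemma fuzzy_ideal_unit_ge:
  assumes \<nu>: "FM \<nu>" and x: "x \<in> S" and pq: "p < n" "q < n" and "c \<le> 1"
    and ge: "\<And>e \<delta> \<gamma> f. e \<in> S \<Longrightarrow> \<delta> \<in> G \<Longrightarrow> \<gamma> \<in> G \<Longrightarrow> f \<in> S \<Longrightarrow>
               c \<le> \<nu> (mat_unit zS p q (mult (mult e \<delta> x) \<gamma> f))"
  shows "c \<le> \<nu> (mat_unit zS p q x)"
proof -
  obtain m1 e \<delta> m2 \<gamma> f where e: "\<forall>k<m1. e k \<in> S \<and> \<delta> k \<in> G" and f: "\<forall>l<m2. \<gamma> l \<in> G \<and> f l \<in> S"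
    and expansion: "\<forall>x\<in>S. x = fsum addS zS (\<lambda>k. fsum addS zS (\<lambda>l. mult (mult (e k) (\<delta> k) x) (\<gamma> l) (f l)) m2) m1"
    using unity_expansion by blast
  define u where "u k l = mult (mult (e k) (\<delta> k) x) (\<gamma> l) (f l)" for k l
  have unit_in: "mat_unit zS p q (u k l) \<in> MS" and unit_ge: "c \<le> \<nu> (mat_unit zS p q (u k l))"
    if "k < m1" "l < m2" for k l
    using that e f x pq ge by (simp_all add: u_def mat_unit_in)
  have row: "fsum madd (mat_zero zS) (\<lambda>l. mat_unit zS p q (u k l)) m2 \<in> MS \<and>
             c \<le> \<nu> (fsum madd (mat_zero zS) (\<lambda>l. mat_unit zS p q (u k l)) m2)" if "k < m1" for k
    using that unit_in unit_ge
    by (simp add: fsum_closed[OF madd_closed_on mat_zero_in] fuzzy_ideal_fsum_ge[OF \<nu> madd_closed_on \<open>c \<le> 1\<close>])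
  from expansion[rule_format, OF x] have "mat_unit zS p q x = mat_unit zS p q (fsum addS zS (\<lambda>k. fsum addS zS (u k) m2) m1)"
    unfolding u_def by (rule arg_cong)
  also have "\<dots> = fsum madd (mat_zero zS) (\<lambda>k. fsum madd (mat_zero zS) (\<lambda>l. mat_unit zS p q (u k l)) m2) m1"
    by (simp add: mat_unit_fsum pq)
  finally have "mat_unit zS p q x = fsum madd (mat_zero zS) (\<lambda>k. fsum madd (mat_zero zS) (\<lambda>l. mat_unit zS p q (u k l)) m2) m1" .
  moreover have "c \<le> \<nu> (fsum madd (mat_zero zS) (\<lambda>k. fsum madd (mat_zero zS) (\<lambda>l. mat_unit zS p q (u k l)) m2) m1)"
    by (intro fuzzy_ideal_fsum_ge[OF \<nu> madd_closed_on \<open>c \<le> 1\<close>] allI impI row)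
  ultimately show ?thesis by simp
qed

lemma fuzzy_ideal_le_unit_entry:
  assumes \<nu>: "FM \<nu>" and A: "A \<in> MS" and ij: "i < n" "j < n" and pq: "p < n" "q < n"
  shows "\<nu> A \<le> \<nu> (mat_unit zS p q (A i j))"
proof (rule fuzzy_ideal_unit_ge[OF \<nu> mat_entry_in[OF A ij] pq fuzzy_ideal_le_one[OF \<nu> A]])
  fix e \<delta> \<gamma> f assume "e \<in> S" "\<delta> \<in> G" "\<gamma> \<in> G" "f \<in> S"
  note facts = this A ij pq
  define R where "R = mmult (mat_unit zS p i e) (mat_unit zG i i \<delta>) A"
  have R_in: "R \<in> MS" unfolding R_def using facts by (intro mmult_closed mat_unit_in) auto
  have R_eq: "R = (\<lambda>a b. if a = p \<and> b < n then mult e \<delta> (A i b) else zS)"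
    unfolding R_def using facts by (simp add: mmult_unit_left)
  have "mmult R (mat_unit zG j j \<gamma>) (mat_unit zS j q f) = (\<lambda>a b. if a < n \<and> b = q then mult (R a j) \<gamma> f else zS)"
    using facts R_in by (simp add: mmult_unit_right)
  also have "\<dots> = mat_unit zS p q (mult (mult e \<delta> (A i j)) \<gamma> f)"
    using facts by (intro ext) (auto simp: R_eq mat_unit_def)
  finally have "mmult R (mat_unit zG j j \<gamma>) (mat_unit zS j q f) = mat_unit zS p q (mult (mult e \<delta> (A i j)) \<gamma> f)" .
  moreover have "\<nu> A \<le> \<nu> R"
    unfolding R_def using facts by (intro fuzzy_ideal_mult_right[OF \<nu>] mat_unit_in) auto
  moreover have "\<nu> R \<le> \<nu> (mmult R (mat_unit zG j j \<gamma>) (mat_unit zS j q f))"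
    using facts R_in by (intro fuzzy_ideal_mult_left[OF \<nu>] mat_unit_in) auto
  ultimately show "\<nu> A \<le> \<nu> (mat_unit zS p q (mult (mult e \<delta> (A i j)) \<gamma> f))" by (metis order_trans)
qed

lemma mat_fuzzy_corner_fuzzy:
  assumes \<nu>: "FM \<nu>"
  shows "mat_fuzzy (corner_fuzzy \<nu>) = \<nu>"
proof
  fix A
  show "mat_fuzzy (corner_fuzzy \<nu>) A = \<nu> A"
  proof (cases "A \<in> MS")
    case A: True
    let ?c = "mat_fuzzy (corner_fuzzy \<nu>) A"
    have corner: "corner_fuzzy \<nu> (A i j) = \<nu> (mat_unit zS 0 0 (A i j))" if "i < n" "j < n" for i j
      using A that by (simp add: corner_fuzzy_def)
    have "\<nu> A \<le> ?c"
      using fuzzy_ideal_le_unit_entry[OF \<nu> A _ _ n_pos n_pos] by (intro mat_fuzzy_ge[OF A]) (simp add: corner)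
    moreover have "?c \<le> \<nu> A"
    proof -
          have unit_in: "mat_unit zS p q (A i j) \<in> MS" if "i < n" "j < n" "p < n" "q < n" for i j p q
        using A that by (simp add: mat_unit_in)
      have c_le_one: "?c \<le> 1"
        using mat_fuzzy_le[OF A n_pos n_pos, of "corner_fuzzy \<nu>"] corner[OF n_pos n_pos]
          fuzzy_ideal_le_one[OF \<nu> unit_in[OF n_pos n_pos n_pos n_pos]]
        by simp
      have unit_ge: "?c \<le> \<nu> (mat_unit zS i j (A i j))" if "i < n" "j < n" for i j
        using mat_fuzzy_le[OF A that, of "corner_fuzzy \<nu>"] corner[OF that]
          fuzzy_ideal_le_unit_entry[OF \<nu> unit_in[OF that n_pos n_pos] n_pos n_pos that]
        by simp
      have row: "fsum madd (mat_zero zS) (\<lambda>j. mat_unit zS i j (A i j)) n \<in> MS \<and>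
                 ?c \<le> \<nu> (fsum madd (mat_zero zS) (\<lambda>j. mat_unit zS i j (A i j)) n)" if "i < n" for i
        using that unit_in unit_ge
        by (simp add: fsum_closed[OF madd_closed_on mat_zero_in] fuzzy_ideal_fsum_ge[OF \<nu> madd_closed_on c_le_one])
      then have "?c \<le> \<nu> (fsum madd (mat_zero zS) (\<lambda>i. fsum madd (mat_zero zS) (\<lambda>j. mat_unit zS i j (A i j)) n) n)"
        by (intro fuzzy_ideal_fsum_ge[OF \<nu> madd_closed_on c_le_one] allI impI row)
      then show ?thesis by (simp only: mat_decomposition[OF A, symmetric])
    qed
    ultimately show ?thesis by simp
  qed (simp add: mat_fuzzy_def fuzzy_ideal_outside[OF \<nu>])
qed

lemma bij_betw_mat_fuzzy:
  "bij_betw mat_fuzzy (fuzzy_ideals S G addS zS mult) (fuzzy_ideals MS MG madd (mat_zero zS) mmult)"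
  by (rule bij_betw_byWitness[where f' = corner_fuzzy])
    (auto simp: fuzzy_ideals_def corner_fuzzy_mat_fuzzy mat_fuzzy_corner_fuzzy
          intro: mat_fuzzy_ideal corner_fuzzy_ideal)

end

theorem theorem3p12:
  fixes S :: "'a set" and G :: "'g set"
    and addS :: "'a \<Rightarrow> 'a \<Rightarrow> 'a" and zS :: 'a
    and addG :: "'g \<Rightarrow> 'g \<Rightarrow> 'g" and zG :: 'g
    and mult :: "'a \<Rightarrow> 'g \<Rightarrow> 'a \<Rightarrow> 'a" and n :: nat
  assumes "gamma_semiring_zero S G addS zS addG zG mult"
    and "has_left_unity S G addS zS mult"
    and "has_right_unity S G addS zS mult"
    and "0 < n"
  shows "\<exists>\<phi>. bij_betw \<phi> (fuzzy_ideals S G addS zS mult)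
              (fuzzy_ideals (mat_carrier S zS n) (mat_carrier G zG n)
                 (mat_add addS zS n) (mat_zero zS) (mat_mult addS zS mult n)) \<and>
            (\<forall>\<mu>\<in>fuzzy_ideals S G addS zS mult. \<forall>\<nu>\<in>fuzzy_ideals S G addS zS mult.
               fuzzy_incl S \<mu> \<nu> \<longrightarrow> fuzzy_incl (mat_carrier S zS n) (\<phi> \<mu>) (\<phi> \<nu>))"
proof -
  interpret zero_gamma_semiring_matrices_unity S G addS zS addG zG mult n
    using assms by unfold_locales
  show ?thesis
    using bij_betw_mat_fuzzy mat_fuzzy_mono by blast
qed

end
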